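(* Let $G$ be a connected plane graph with real arc lengths, no negative cycles and unique shortest paths, and let $S$ be a generic, independent set of exactly $3$ sites located at vertices on the outer face of $G$. Then the abstract Voronoi diagram $\mathrm{AVD}(S)$ has at most one vertex other than $a_\infty$.
   Context: A site is a pair $s=(v_s,w_s)$ with $v_s\in V(G)$, $w_s\in\mathbb{R}$. $\mathrm{cell}_G(s,S)=\{x\in V(G):\forall t\in S\setminus\{s\},\ w_s+d_G(v_s,x)\le w_t+d_G(v_t,x)\}$; $S$ is generic if these inequalities are never equalities for distinct sites, and independent if all cells are nonempty. $\mathrm{GD}_G(s,t)=\mathrm{cell}_G(s,\{s,t\})$. $\mathrm{bis}_G(s,t)$ is the closed curve of the cycle in the dual graph $G^*$ formed by the duals of the edges $xy$ with $x\in\mathrm{GD}_G(s,t)$, $y\in\mathrm{GD}_G(t,s)$; $D_G(s,t)$ is the component of $\mathbb{R}^2\setminus\mathrm{bis}_G(s,t)$ containing $v_s$; $\mathrm{AVR}(s,S)=\bigcap_{t\ne s}D_G(s,t)$; $\mathrm{AVD}(S)=\mathbb{R}^2\setminus\bigcup_{s\in S}\mathrm{AVR}(s,S)$, which is a plane graph contained in $G^*$ whose vertices are its points of degree at least $3$. $a_\infty$ is the vertex of $G^*$ dual to the outer face of $G$. *)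

theory Defs
  imports Complex_Main
begin

text \<open>A plane graph is represented combinatorially by a rotation system (combinatorial map)
  of genus 0 with a designated outer face.  Darts = arcs; every edge consists of two
  opposite arcs d and rv d, each with its own real length.\<close>

record ('v, 'd) pmap =
  verts :: "'v set"
  darts :: "'d set"
  tl_of :: "'d \<Rightarrow> 'v"
  hd_of :: "'d \<Rightarrow> 'v"
  rv :: "'d \<Rightarrow> 'd"
  rot :: "'d \<Rightarrow> 'd"
  len :: "'d \<Rightarrow> real"
  outer :: "'d set"

definition face_perm :: "('v, 'd) pmap \<Rightarrow> 'd \<Rightarrow> 'd" where
  "face_perm G = (\<lambda>d. rot G (rv G d))"

definition face_of :: "('v, 'd) pmap \<Rightarrow> 'd \<Rightarrow> 'd set" where
  "face_of G d = {(face_perm G ^^ n) d | n. True}"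

definition faces :: "('v, 'd) pmap \<Rightarrow> 'd set set" where
  "faces G = face_of G ` darts G"

fun is_walk :: "('v, 'd) pmap \<Rightarrow> 'v \<Rightarrow> 'd list \<Rightarrow> 'v \<Rightarrow> bool" where
  "is_walk G u [] x \<longleftrightarrow> u = x \<and> u \<in> verts G"
| "is_walk G u (d # ds) x \<longleftrightarrow> d \<in> darts G \<and> tl_of G d = u \<and> is_walk G (hd_of G d) ds x"

definition is_path :: "('v, 'd) pmap \<Rightarrow> 'v \<Rightarrow> 'd list \<Rightarrow> 'v \<Rightarrow> bool" where
  "is_path G u ds x \<longleftrightarrow> is_walk G u ds x \<and> distinct (u # map (hd_of G) ds)"

definition walk_len :: "('v, 'd) pmap \<Rightarrow> 'd list \<Rightarrow> real" where
  "walk_len G ds = sum_list (map (len G) ds)"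

definition connected_map :: "('v, 'd) pmap \<Rightarrow> bool" where
  "connected_map G \<longleftrightarrow> (\<forall>u\<in>verts G. \<forall>x\<in>verts G. \<exists>ds. is_walk G u ds x)"

definition plane_map :: "('v, 'd) pmap \<Rightarrow> bool" where
  "plane_map G \<longleftrightarrow>
     finite (verts G) \<and> finite (darts G) \<and>
     (\<forall>d\<in>darts G. tl_of G d \<in> verts G \<and> hd_of G d \<in> verts G \<and> rv G d \<in> darts G \<and>
                    rv G (rv G d) = d \<and> rv G d \<noteq> d \<and> hd_of G d = tl_of G (rv G d)) \<and>
     bij_betw (rot G) (darts G) (darts G) \<and>
     (\<forall>d\<in>darts G. {(rot G ^^ n) d | n. True} = {d'\<in>darts G. tl_of G d' = tl_of G d}) \<and>
     2 * int (card (verts G)) - int (card (darts G)) + 2 * int (card (faces G)) = 4 \<and>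
     outer G \<in> faces G"

definition dist :: "('v, 'd) pmap \<Rightarrow> 'v \<Rightarrow> 'v \<Rightarrow> real" where
  "dist G u x = Inf {walk_len G ds | ds. is_walk G u ds x}"

definition no_neg_cycles :: "('v, 'd) pmap \<Rightarrow> bool" where
  "no_neg_cycles G \<longleftrightarrow> (\<forall>u ds. is_walk G u ds u \<longrightarrow> walk_len G ds \<ge> 0)"

definition unique_shortest_paths :: "('v, 'd) pmap \<Rightarrow> bool" where
  "unique_shortest_paths G \<longleftrightarrow>
     (\<forall>u\<in>verts G. \<forall>x\<in>verts G. \<exists>!ds. is_path G u ds x \<and> walk_len G ds = dist G u x)"

text \<open>Sites: (vertex, weight).\<close>
type_synonym 'v site = "'v \<times> real"

definition cell :: "('v, 'd) pmap \<Rightarrow> 'v site \<Rightarrow> 'v site set \<Rightarrow> 'v set" where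
  "cell G s S = {x \<in> verts G. \<forall>t\<in>S - {s}.
      snd s + dist G (fst s) x \<le> snd t + dist G (fst t) x}"

definition generic :: "('v, 'd) pmap \<Rightarrow> 'v site set \<Rightarrow> bool" where
  "generic G S \<longleftrightarrow> (\<forall>s\<in>S. \<forall>t\<in>S. s \<noteq> t \<longrightarrow>
      (\<forall>x\<in>verts G. snd s + dist G (fst s) x \<noteq> snd t + dist G (fst t) x))"

definition independent :: "('v, 'd) pmap \<Rightarrow> 'v site set \<Rightarrow> bool" where
  "independent G S \<longleftrightarrow> (\<forall>s\<in>S. cell G s S \<noteq> {})"

definition GD :: "('v, 'd) pmap \<Rightarrow> 'v site \<Rightarrow> 'v site \<Rightarrow> 'v set" where
  "GD G s t = cell G s {s, t}"

text \<open>Arcs whose dual edges form bis(s,t).\<close>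
definition bis_dart :: "('v, 'd) pmap \<Rightarrow> 'v site \<Rightarrow> 'v site \<Rightarrow> 'd \<Rightarrow> bool" where
  "bis_dart G s t d \<longleftrightarrow> d \<in> darts G \<and>
     ((tl_of G d \<in> GD G s t \<and> hd_of G d \<in> GD G t s) \<or> (tl_of G d \<in> GD G t s \<and> hd_of G d \<in> GD G s t))"

text \<open>Primal vertices lying in D_G(s,t): those reachable from v_s without crossing bis(s,t).\<close>
definition side :: "('v, 'd) pmap \<Rightarrow> 'v site \<Rightarrow> 'v site \<Rightarrow> 'v set" where
  "side G s t = {x. \<exists>ds. is_walk G (fst s) ds x \<and> (\<forall>d\<in>set ds. \<not> bis_dart G s t d)}"

text \<open>The (interior of the) dual edge of arc d lies in the open region D_G(s,t).\<close>
definition dual_edge_in_D :: "('v, 'd) pmap \<Rightarrow> 'v site \<Rightarrow> 'v site \<Rightarrow> 'd \<Rightarrow> bool" where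
  "dual_edge_in_D G s t d \<longleftrightarrow> \<not> bis_dart G s t d \<and> tl_of G d \<in> side G s t"

definition dual_edge_in_AVR :: "('v, 'd) pmap \<Rightarrow> 'v site set \<Rightarrow> 'v site \<Rightarrow> 'd \<Rightarrow> bool" where
  "dual_edge_in_AVR G S s d \<longleftrightarrow> (\<forall>t\<in>S - {s}. dual_edge_in_D G s t d)"

text \<open>The dual edge of d is an edge of AVD(S).\<close>
definition AVD_edge :: "('v, 'd) pmap \<Rightarrow> 'v site set \<Rightarrow> 'd \<Rightarrow> bool" where
  "AVD_edge G S d \<longleftrightarrow> d \<in> darts G \<and> (\<forall>s\<in>S. \<not> dual_edge_in_AVR G S s d)"

text \<open>Degree in AVD(S) of the dual vertex f (a face = set of darts); loops count twice.\<close>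
definition AVD_deg :: "('v, 'd) pmap \<Rightarrow> 'v site set \<Rightarrow> 'd set \<Rightarrow> nat" where
  "AVD_deg G S f = card {d \<in> f. AVD_edge G S d}"

definition AVD_vertices :: "('v, 'd) pmap \<Rightarrow> 'v site set \<Rightarrow> 'd set set" where
  "AVD_vertices G S = {f \<in> faces G. AVD_deg G S f \<ge> 3}"

definition on_outer_face :: "('v, 'd) pmap \<Rightarrow> 'v \<Rightarrow> bool" where
  "on_outer_face G v \<longleftrightarrow> (\<exists>d\<in>outer G. tl_of G d = v)"

end

theory Submission
  imports Defs "HOL-Combinatorics.Orbits"
begin

text \<open>
  Label every vertex with the site whose weighted distance to it is smallest. Shortest paths
  from a site stay inside its cell, so the label classes are connected, and the edges of
  \<open>AVD(S)\<close> are exactly the duals of the edges whose endpoints carry different labels. Hence the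
  vertices of \<open>AVD(S)\<close> are the faces along whose boundary the label changes at least three times.

  For any vertex labelling of a connected plane map with \<open>k \<ge> 2\<close> connected label classes
  there are at most \<open>2k - 4\<close> such faces. Let \<open>\<alpha>\<close> rotate darts around their tail and let \<open>\<beta>\<close>
  reverse the darts that do not change label and fix the others. The genus of the hypermap
  \<open>(\<alpha>, \<beta>)\<close> is nonnegative: \<open>c(\<alpha>) + c(\<beta>) + c(\<alpha>\<beta>) \<le> |D| + 2 comp(\<alpha>, \<beta>)\<close>, where \<open>c\<close> counts
  cycles. Here \<open>c(\<alpha>) \<ge> V\<close>, \<open>2 c(\<beta>) = |D| + X\<close> for the \<open>X\<close> label-changing darts, the faces
  without label change are cycles of \<open>\<alpha>\<beta>\<close> and every label contributes one more, and
  \<open>comp(\<alpha>, \<beta>) \<le> k\<close>. Since no face changes label exactly once, Euler's formula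
  \<open>2V - |D| + 2F = 4\<close> yields the bound. For three sites it is \<open>2\<close>, and one of the two faces
  is the outer face, which meets all three sites.
\<close>

lemma card_image_le_card_image:
  assumes "finite A" "\<And>x y. x \<in> A \<Longrightarrow> y \<in> A \<Longrightarrow> g x = g y \<Longrightarrow> h x = h y"
  shows "card (h ` A) \<le> card (g ` A)"
proof -
  have "h (inv_into A g (g x)) = h x" if "x \<in> A" for x
    using assms(2) inv_into_into[of "g x" g A] f_inv_into_f[of "g x" g A] that by blast
  then have "h ` A = (\<lambda>v. h (inv_into A g v)) ` g ` A" by (simp add: image_image)
  then show ?thesis using assms(1) by (simp add: card_image_le)
qed

definition num_cycles :: "('a \<Rightarrow> 'a) \<Rightarrow> 'a set \<Rightarrow> nat" where
  "num_cycles f D = card (orbit f ` D)"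

definition orbits_avoiding :: "('a \<Rightarrow> 'a) \<Rightarrow> 'a set \<Rightarrow> 'a set \<Rightarrow> 'a set set" where
  "orbits_avoiding f D T = {Q \<in> orbit f ` D. Q \<inter> T = {}}"

lemma orbit_eq_if_in_orbit:
  assumes "permutation f" "y \<in> orbit f x" shows "orbit f y = orbit f x"
  using assms cyclic_on_orbit' orbit_cyclic_eq3 by metis

lemma orbits_disjoint:
  assumes "permutation f" "orbit f x \<noteq> orbit f y" shows "orbit f x \<inter> orbit f y = {}"
  using assms orbit_eq_if_in_orbit[OF assms(1)] by blast

lemma funpow_Suc_in_orbit: "(f ^^ Suc n) x \<in> orbit f x"
  unfolding orbit_altdef by blast

lemma num_cycles_id: "num_cycles id D = card D"
proof -
  have "orbit id y = {y}" for y :: 'a by (simp add: orbit_eq_singleton_iff)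
  then have "orbit id ` D = (\<lambda>y. {y}) ` D" by simp
  then show ?thesis by (simp add: num_cycles_def card_image)
qed

lemma orbit_comp_transpose_eq:
  assumes "permutation f" "orbit f y \<inter> {x, w} = {}"
  shows "orbit (f \<circ> transpose x w) y = orbit f y"
proof (rule orbit_cong)
  show "y \<in> orbit f y" using assms(1) by (rule permutation_self_in_orbit)
  fix s assume "s \<in> orbit f y"
  then have "s \<noteq> x" "s \<noteq> w" using assms(2) by auto
  then show "(f \<circ> transpose x w) s = f s" by simp
qed

lemma orbits_avoiding_cong:
  assumes "\<And>y. y \<in> D \<Longrightarrow> orbit f y \<inter> T = {} \<or> orbit g y \<inter> T = {} \<Longrightarrow> orbit f y = orbit g y"
  shows "orbits_avoiding f D T = orbits_avoiding g D T"
  unfolding orbits_avoiding_def using assms by (auto simp: image_iff)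

lemma orbits_avoiding_comp_transpose:
  assumes "f permutes D" "finite D" "x \<in> D" "w \<in> D"
  shows "orbits_avoiding (f \<circ> transpose x w) D {x, w} = orbits_avoiding f D {x, w}"
proof (rule orbits_avoiding_cong)
  let ?g = "f \<circ> transpose x w"
  have "?g permutes D" using assms by (intro permutes_compose permutes_swap_id)
  then have "permutation ?g" "permutation f"
    using assms permutes_imp_permutation by blast+
  moreover have "?g \<circ> transpose x w = f" by (simp add: comp_assoc)
  moreover fix y assume "orbit ?g y \<inter> {x, w} = {} \<or> orbit f y \<inter> {x, w} = {}"
  ultimately show "orbit ?g y = orbit f y" using orbit_comp_transpose_eq by metis
qed

lemma num_cycles_split:
  assumes "f permutes D" "finite D" "x \<in> D" "w \<in> D"
  shows "num_cycles f D = card (orbits_avoiding f D {x, w}) + card {orbit f x, orbit f w}"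
proof -
  have pf: "permutation f" using assms permutes_imp_permutation by blast
  have orbits_eq: "orbit f ` D = orbits_avoiding f D {x, w} \<union> {orbit f x, orbit f w}"
  proof (intro set_eqI iffI)
    fix Q assume Q: "Q \<in> orbit f ` D"
    show "Q \<in> orbits_avoiding f D {x, w} \<union> {orbit f x, orbit f w}"
    proof (cases "Q \<inter> {x, w} = {}")
      case True then show ?thesis using Q by (auto simp: orbits_avoiding_def)
    next
      case False
      then obtain y z where "Q = orbit f y" "z \<in> {x, w}" "z \<in> orbit f y" using Q by auto
      then show ?thesis using orbit_eq_if_in_orbit[OF pf] by fastforce
    qed
  qed (use assms in \<open>auto simp: orbits_avoiding_def\<close>)
  have disj: "orbits_avoiding f D {x, w} \<inter> {orbit f x, orbit f w} = {}"
    using permutation_self_in_orbit[OF pf] by (auto simp: orbits_avoiding_def)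
  have fin: "finite (orbits_avoiding f D {x, w})" using assms by (auto simp: orbits_avoiding_def)
  show ?thesis unfolding num_cycles_def orbits_eq using card_Un_disjoint[OF fin _ disj] by simp
qed

lemma in_orbit_comp_transpose:
  assumes "permutation f" "w \<notin> orbit f x"
  shows "w \<in> orbit (f \<circ> transpose x w) x"
proof -
  define g where "g = f \<circ> transpose x w"
  \<comment> \<open>After its first step, the \<open>g\<close>-orbit of \<open>x\<close> follows the \<open>f\<close>-orbit of \<open>w\<close> until it reaches \<open>w\<close>.\<close>
  have chase: "w \<in> orbit g x \<or> (g ^^ Suc i) x = (f ^^ Suc i) w" for i
  proof (induction i)
    case 0 then show ?case by (simp add: g_def)
  next
    case (Suc i)
    show ?case
    proof (cases "w \<in> orbit g x")
      case False
      then have eq: "(g ^^ Suc i) x = (f ^^ Suc i) w" using Suc by blast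
      have "(f ^^ Suc i) w \<noteq> w"
        using False eq funpow_Suc_in_orbit[of i g x] by auto
      moreover have "(f ^^ Suc i) w \<noteq> x"
        using assms funpow_Suc_in_orbit[of i f w] orbit_eq_if_in_orbit permutation_self_in_orbit
        by metis
      ultimately have "(g ^^ Suc (Suc i)) x = (f ^^ Suc (Suc i)) w"
        using eq by (simp add: g_def)
      then show ?thesis by blast
    qed blast
  qed
  obtain n where "0 < n" "(f ^^ n) w = w"
    using permutation_self_in_orbit[OF assms(1), of w] by (auto simp: orbit_altdef)
  then obtain i where "(f ^^ Suc i) w = w" by (auto simp: gr0_conv_Suc)
  then have "w \<in> orbit g x" using chase[of i] funpow_Suc_in_orbit[of i g x] by metis
  then show ?thesis by (simp add: g_def)
qed

lemma num_cycles_comp_transpose_merge: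
  assumes "f permutes D" "finite D" "x \<in> D" "w \<in> D" "w \<notin> orbit f x"
  shows "num_cycles (f \<circ> transpose x w) D + 1 = num_cycles f D"
proof -
  let ?g = "f \<circ> transpose x w"
  have gp: "?g permutes D" using assms by (intro permutes_compose permutes_swap_id)
  have pf: "permutation f" and pg: "permutation ?g"
    using assms gp permutes_imp_permutation by blast+
  have "orbit ?g w = orbit ?g x"
    using in_orbit_comp_transpose[OF pf assms(5)] orbit_eq_if_in_orbit[OF pg] by metis
  moreover have "orbit f x \<noteq> orbit f w"
    using assms(5) permutation_self_in_orbit[OF pf, of w] by metis
  ultimately show ?thesis
    using num_cycles_split[OF gp assms(2-4)] num_cycles_split[OF assms(1-4)]
      orbits_avoiding_comp_transpose[OF assms(1-4)] by simp
qed

lemma num_cycles_le_comp_transpose: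
  assumes "f permutes D" "finite D" "x \<in> D" "w \<in> D"
  shows "num_cycles f D \<le> num_cycles (f \<circ> transpose x w) D + 1"
proof -
  have "(f \<circ> transpose x w) permutes D" using assms by (intro permutes_compose permutes_swap_id)
  moreover have "card {orbit f x, orbit f w} \<le> 2" by (simp add: card_insert_le_m1)
  ultimately show ?thesis
    using num_cycles_split[OF _ assms(2-4)] num_cycles_split[OF assms(1-4)]
      orbits_avoiding_comp_transpose[OF assms(1-4)] by (fastforce simp: card_insert_if)
qed

lemma orbit_involution:
  assumes "\<And>d. d \<in> D \<Longrightarrow> f (f d) = d" "d \<in> D" shows "orbit f d = {d, f d}"
proof -
  have "orbit f d \<subseteq> {d, f d}"
  proof
    fix e assume "e \<in> orbit f d" then show "e \<in> {d, f d}"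
      by induction (auto simp: assms)
  qed
  moreover have "f d \<in> orbit f d" by (rule orbit.base)
  then have "f (f d) \<in> orbit f d" by (rule orbit.step)
  then have "d \<in> orbit f d" using assms by simp
  ultimately show ?thesis using \<open>f d \<in> orbit f d\<close> by blast
qed

lemma card_eq_sum_card_orbits:
  assumes "permutation f" "finite A" "\<And>d. d \<in> A \<Longrightarrow> orbit f d \<subseteq> A"
  shows "card A = (\<Sum>Q\<in>orbit f ` A. card Q)"
proof -
  have "\<Union> (orbit f ` A) = A" using assms(3) permutation_self_in_orbit[OF assms(1)] by blast
  moreover have "pairwise disjnt (orbit f ` A)"
    unfolding pairwise_def disjnt_def using orbits_disjoint[OF assms(1)] by blast
  moreover have "finite Q" if "Q \<in> orbit f ` A" for Q
    using that assms(2,3) finite_subset by blast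
  ultimately show ?thesis using card_Union_disjoint[of "orbit f ` A"] by simp
qed

lemma card_add_card_fixpoints_involution:
  assumes "f permutes D" "finite D" "\<And>d. d \<in> D \<Longrightarrow> f (f d) = d"
  shows "card D + card {d \<in> D. f d = d} = 2 * num_cycles f D"
proof -
  let ?Fix = "{d \<in> D. f d = d}" and ?M = "{d \<in> D. f d \<noteq> d}"
  have pf: "permutation f" using assms permutes_imp_permutation by blast
  have orbit_f: "orbit f d = {d, f d}" if "d \<in> D" for d
    by (rule orbit_involution[where D = D]) (use assms(3) that in auto)
  have card_orbit: "card (orbit f d) = (if f d = d then 1 else 2)" if "d \<in> D" for d
    using orbit_f[OF that] by auto
  have "orbit f ` D = orbit f ` ?Fix \<union> orbit f ` ?M" by auto
  moreover have "orbit f ` ?Fix \<inter> orbit f ` ?M = {}"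
  proof (rule ccontr)
    assume "orbit f ` ?Fix \<inter> orbit f ` ?M \<noteq> {}"
    then obtain d e where "d \<in> ?Fix" "e \<in> ?M" "orbit f d = orbit f e" by blast
    then show False using card_orbit[of d] card_orbit[of e] by simp
  qed
  moreover have "inj_on (orbit f) ?Fix"
    by (rule inj_onI) (use orbit_f in auto)
  then have "card (orbit f ` ?Fix) = card ?Fix" by (rule card_image)
  moreover have "card ?M = 2 * card (orbit f ` ?M)"
  proof -
    have "orbit f d \<subseteq> ?M" if "d \<in> ?M" for d
      using that orbit_f[of d] assms(3)[of d] permutes_in_image[OF assms(1), of d] by auto
    then have "card ?M = (\<Sum>Q\<in>orbit f ` ?M. card Q)"
      by (intro card_eq_sum_card_orbits[OF pf]) (use assms(2) in auto)
    also have "\<dots> = (\<Sum>Q\<in>orbit f ` ?M. 2)"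
      using card_orbit by (intro sum.cong) auto
    finally show ?thesis by simp
  qed
  moreover have "card D = card ?Fix + card ?M"
  proof -
    have "D = ?Fix \<union> ?M" "?Fix \<inter> ?M = {}" by auto
    then show ?thesis using card_Un_disjoint[of ?Fix ?M] assms(2) by simp
  qed
  ultimately show ?thesis
    unfolding num_cycles_def using assms(2) card_Un_disjoint[of "orbit f ` ?Fix" "orbit f ` ?M"] by simp
qed

definition perm_pair_edges :: "('a \<Rightarrow> 'a) \<Rightarrow> ('a \<Rightarrow> 'a) \<Rightarrow> 'a set \<Rightarrow> ('a \<times> 'a) set" where
  "perm_pair_edges a b D = (\<Union>z\<in>D. {(z, a z), (a z, z), (z, b z), (b z, z)})"

definition num_components :: "('a \<Rightarrow> 'a) \<Rightarrow> ('a \<Rightarrow> 'a) \<Rightarrow> 'a set \<Rightarrow> nat" where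
  "num_components a b D = card ((\<lambda>y. (perm_pair_edges a b D)\<^sup>* `` {y}) ` D)"

lemma sym_perm_pair_edges: "sym (perm_pair_edges a b D)"
  unfolding perm_pair_edges_def sym_def by blast

lemma rtrancl_Image_eq_if_mem:
  assumes "sym E" "z \<in> E\<^sup>* `` {y}" shows "E\<^sup>* `` {z} = E\<^sup>* `` {y}"
proof -
  have "(y, z) \<in> E\<^sup>*" "(z, y) \<in> E\<^sup>*"
    using assms sym_rtrancl[OF assms(1)] by (auto dest: symD)
  then show ?thesis by (auto intro: rtrancl_trans)
qed

lemma rtrancl_insert_sym_pair_subset:
  assumes "sym E"
  shows "(insert (x, w) (insert (w, x) E))\<^sup>* \<subseteq>
    E\<^sup>* \<union> (E\<^sup>* `` {x, w}) \<times> (E\<^sup>* `` {x, w})"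
  using sym_rtrancl[OF assms] by (auto simp: rtrancl_insert dest: symD)

lemma rtrancl_insert_sym_pair_Image:
  assumes "sym E"
  shows "(insert (x, w) (insert (w, x) E))\<^sup>* `` {y} =
    (if y \<in> E\<^sup>* `` {x, w} then E\<^sup>* `` {x, w} else E\<^sup>* `` {y})"
proof -
  let ?F = "insert (x, w) (insert (w, x) E)"
  have EF: "E\<^sup>* \<subseteq> ?F\<^sup>*" by (rule rtrancl_mono) blast
  have symF: "sym (?F\<^sup>*)" using assms by (intro sym_rtrancl) (auto simp: sym_def)
  have xw: "(x, w) \<in> ?F\<^sup>*" "(w, x) \<in> ?F\<^sup>*" by auto
  show ?thesis
  proof (cases "y \<in> E\<^sup>* `` {x, w}")
    case True
    then have "(y, x) \<in> ?F\<^sup>*" using EF xw symF by (auto dest: symD intro: rtrancl_trans)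
    then have "E\<^sup>* `` {x, w} \<subseteq> ?F\<^sup>* `` {y}" using EF xw by (auto intro: rtrancl_trans)
    moreover have "?F\<^sup>* `` {y} \<subseteq> E\<^sup>* `` {x, w}"
      using True rtrancl_insert_sym_pair_subset[OF assms, of x w] by (blast intro: rtrancl_trans)
    ultimately show ?thesis using True by auto
  next
    case False
    then show ?thesis using EF rtrancl_insert_sym_pair_subset[OF assms, of x w] by auto
  qed
qed

lemma card_rtrancl_classes_le_insert_sym_pair:
  assumes "sym E" "finite D" "x \<in> D" "w \<in> D"
  shows "card ((\<lambda>y. E\<^sup>* `` {y}) ` D) \<le>
    card ((\<lambda>y. (insert (x, w) (insert (w, x) E))\<^sup>* `` {y}) ` D) + 1"
proof -
  let ?F = "insert (x, w) (insert (w, x) E)"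
  let ?A = "(\<lambda>y. E\<^sup>* `` {y}) ` D" and ?B = "(\<lambda>y. ?F\<^sup>* `` {y}) ` D"
  let ?K = "E\<^sup>* `` {x, w}" and ?R = "{E\<^sup>* `` {x}, E\<^sup>* `` {w}}"
  have class_eq: "E\<^sup>* `` {y} = E\<^sup>* `` {z}" if "y \<in> E\<^sup>* `` {z}" for y z
    using rtrancl_Image_eq_if_mem[OF assms(1) that] .
  have "?F\<^sup>* `` {x} = ?K" using rtrancl_insert_sym_pair_Image[OF assms(1)] by auto
  then have "?K \<in> ?B" using assms(3) by blast
  moreover have "C \<in> ?B" if C: "C \<in> ?A - ?R" for C
  proof -
    obtain y where y: "y \<in> D" "C = E\<^sup>* `` {y}" using C by blast
    then have "y \<notin> ?K" using C class_eq by blast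
    then have "?F\<^sup>* `` {y} = C" using y rtrancl_insert_sym_pair_Image[OF assms(1)] by simp
    then show ?thesis using y by blast
  qed
  ultimately have "insert ?K (?A - ?R) \<subseteq> ?B" by blast
  moreover have "?K \<notin> ?A - ?R" using class_eq by blast
  ultimately have "card (?A - ?R) + 1 \<le> card ?B"
    using card_mono[of ?B "insert ?K (?A - ?R)"] assms(2) by simp
  moreover have "card ?A - card ?R \<le> card (?A - ?R)" by (simp add: diff_card_le_card_Diff)
  moreover have "card ?R \<le> 2" by (simp add: card_insert_le_m1)
  ultimately show ?thesis by linarith
qed

lemma rtrancl_insert_sym_pair_eq:
  assumes "sym E" "(x, w) \<in> E\<^sup>*"
  shows "(insert (x, w) (insert (w, x) E))\<^sup>* = E\<^sup>*"
proof
  have "(w, x) \<in> E\<^sup>*" using assms sym_rtrancl by (metis symD)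
  then show "(insert (x, w) (insert (w, x) E))\<^sup>* \<subseteq> E\<^sup>*"
    using assms(2) by (intro rtrancl_subset_rtrancl) auto
qed (rule rtrancl_mono, blast)

lemma perm_pair_edges_subset_rtrancl:
  assumes "sym F" "\<And>z. z \<in> D \<Longrightarrow> (z, a z) \<in> F\<^sup>* \<and> (z, b z) \<in> F\<^sup>*"
  shows "perm_pair_edges a b D \<subseteq> F\<^sup>*"
  using assms sym_rtrancl[OF assms(1)] unfolding perm_pair_edges_def by (blast dest: symD)

lemma rtrancl_perm_pair_edges_comp_transpose:
  assumes "x \<in> D" "w \<in> D" "b x = x"
  shows "(perm_pair_edges a (b \<circ> transpose x w) D)\<^sup>* =
    (insert (x, w) (insert (w, x) (perm_pair_edges a b D)))\<^sup>*"
proof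
  let ?E = "perm_pair_edges a b D" and ?E' = "perm_pair_edges a (b \<circ> transpose x w) D"
  let ?F = "insert (x, w) (insert (w, x) ?E)"
  have edge: "(z, a z) \<in> ?E" "(z, b z) \<in> ?E" "(z, a z) \<in> ?E'" "(z, b (transpose x w z)) \<in> ?E'"
    if "z \<in> D" for z
    using that unfolding perm_pair_edges_def by auto
  have "sym ?F" using sym_perm_pair_edges[of a b D] by (auto simp: sym_def)
  moreover have "(z, b (transpose x w z)) \<in> ?F\<^sup>*" if "z \<in> D" for z
  proof -
    have "(x, b w) \<in> ?F\<^sup>*" using edge(2)[OF assms(2)] by (blast intro: converse_rtrancl_into_rtrancl)
    then show ?thesis using edge(2)[OF that] assms(3) by (cases "z = x \<or> z = w") auto
  qed
  ultimately show "?E'\<^sup>* \<subseteq> ?F\<^sup>*"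
    using edge(1) by (intro rtrancl_subset_rtrancl perm_pair_edges_subset_rtrancl) auto
next
  let ?E = "perm_pair_edges a b D" and ?E' = "perm_pair_edges a (b \<circ> transpose x w) D"
  have edge: "(z, a z) \<in> ?E'" "(z, b (transpose x w z)) \<in> ?E'" if "z \<in> D" for z
    using that unfolding perm_pair_edges_def by auto
  have "(w, x) \<in> ?E'" using edge(2)[OF assms(2)] assms(3) by simp
  then have wx: "(w, x) \<in> ?E'" "(x, w) \<in> ?E'" by (metis sym_perm_pair_edges symD)+
  have "(z, b z) \<in> ?E'\<^sup>*" if "z \<in> D" for z
  proof -
    have "(w, b w) \<in> ?E'\<^sup>*" using wx edge(2)[OF assms(1)] by (auto intro: converse_rtrancl_into_rtrancl)
    then show ?thesis using edge(2)[OF that] assms(3) by (cases "z = x \<or> z = w") auto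
  qed
  then have "?E \<subseteq> ?E'\<^sup>*"
    using edge(1) sym_perm_pair_edges by (intro perm_pair_edges_subset_rtrancl) auto
  then show "(insert (x, w) (insert (w, x) ?E))\<^sup>* \<subseteq> ?E'\<^sup>*"
    using wx by (intro rtrancl_subset_rtrancl) auto
qed

lemma perm_pair_edgesI: "z \<in> D \<Longrightarrow> (z, a z) \<in> perm_pair_edges a b D"
  "z \<in> D \<Longrightarrow> (z, b z) \<in> perm_pair_edges a b D"
  unfolding perm_pair_edges_def by blast+

lemma orbit_subset_rtrancl_Image:
  assumes "f ` D \<subseteq> D" "x \<in> D" "\<And>z. z \<in> D \<Longrightarrow> (z, f z) \<in> R\<^sup>*"
  shows "orbit f x \<subseteq> R\<^sup>* `` {x}"
proof
  fix z assume "z \<in> orbit f x"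
  then have "z \<in> D \<and> (x, z) \<in> R\<^sup>*"
  proof induction
    case base then show ?case using assms by blast
  next
    case (step z)
    then have "(z, f z) \<in> R\<^sup>*" "f z \<in> D" using assms(1,3) by auto
    then show ?case using step rtrancl_trans[of x z R "f z"] by blast
  qed
  then show "z \<in> R\<^sup>* `` {x}" by blast
qed

lemma orbit_comp_subset_rtrancl:
  assumes "a ` D \<subseteq> D" "b ` D \<subseteq> D" "x \<in> D"
  shows "orbit (a \<circ> b) x \<subseteq> (perm_pair_edges a b D)\<^sup>* `` {x}"
proof (rule orbit_subset_rtrancl_Image)
  fix z assume z: "z \<in> D"
  then have "b z \<in> D" using assms(2) by blast
  then have "(z, b z) \<in> (perm_pair_edges a b D)\<^sup>*" "(b z, a (b z)) \<in> perm_pair_edges a b D"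
    using perm_pair_edgesI(2)[OF z] perm_pair_edgesI(1)[OF \<open>b z \<in> D\<close>] by auto
  then show "(z, (a \<circ> b) z) \<in> (perm_pair_edges a b D)\<^sup>*" by (simp add: rtrancl_into_rtrancl)
qed (use assms in \<open>auto simp: image_subset_iff\<close>)

lemma num_components_id:
  assumes "a permutes D" "finite D"
  shows "num_components a id D = num_cycles a D"
proof -
  have pa: "permutation a" using assms permutes_imp_permutation by blast
  have "(perm_pair_edges a id D)\<^sup>* `` {y} = orbit a y" if "y \<in> D" for y
  proof
    show "orbit a y \<subseteq> (perm_pair_edges a id D)\<^sup>* `` {y}"
      by (rule orbit_subset_rtrancl_Image[OF _ that])
        (use permutes_image[OF assms(1)] in \<open>auto intro!: r_into_rtrancl perm_pair_edgesI(1)\<close>)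
  next
    have "z' \<in> orbit a y" if e: "(z, z') \<in> perm_pair_edges a id D" and z: "z \<in> orbit a y" for z z'
    proof -
      consider "z' = a z" | "z = a z'" | "z' = z" using e unfolding perm_pair_edges_def by fastforce
      then show ?thesis
      proof cases
        case 2
        then have "orbit a z' = orbit a y"
          using z orbit_eq_if_in_orbit[OF pa] permutation_orbit_step[OF pa, of z'] by metis
        then show ?thesis using permutation_self_in_orbit[OF pa, of z'] by simp
      qed (use z in \<open>auto intro: orbit.step\<close>)
    qed
    then show "(perm_pair_edges a id D)\<^sup>* `` {y} \<subseteq> orbit a y"
      using permutation_self_in_orbit[OF pa, of y] by (auto elim: rtrancl_induct)
  qed
  then show ?thesis unfolding num_components_def num_cycles_def by (metis (no_types, lifting) image_cong)
qed

lemma num_cycles_sum_le_comp_transpose: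
  assumes fin: "finite D" and a: "a permutes D" and b: "b permutes D"
    and "x \<in> D" "w \<in> D" "x \<noteq> w" "b x = x"
    and IH: "num_cycles a D + num_cycles b D + num_cycles (a \<circ> b) D \<le> card D + 2 * num_components a b D"
  shows "num_cycles a D + num_cycles (b \<circ> transpose x w) D + num_cycles (a \<circ> (b \<circ> transpose x w)) D
    \<le> card D + 2 * num_components a (b \<circ> transpose x w) D"
proof -
  let ?\<tau> = "transpose x w" and ?\<rho> = "a \<circ> b"
  let ?E = "perm_pair_edges a b D"
  have \<rho>: "?\<rho> permutes D" using permutes_compose[OF b a] .
  have "orbit b x = {x}" using \<open>b x = x\<close> by (simp add: orbit_eq_singleton_iff)
  then have b_merge: "num_cycles (b \<circ> ?\<tau>) D + 1 = num_cycles b D"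
    using num_cycles_comp_transpose_merge[OF b fin \<open>x \<in> D\<close> \<open>w \<in> D\<close>] \<open>x \<noteq> w\<close> by simp
  have edges: "(perm_pair_edges a (b \<circ> ?\<tau>) D)\<^sup>* = (insert (x, w) (insert (w, x) ?E))\<^sup>*"
    using rtrancl_perm_pair_edges_comp_transpose assms(4,5,7) .
  have "a \<circ> (b \<circ> ?\<tau>) = ?\<rho> \<circ> ?\<tau>" by (simp add: comp_assoc)
  moreover consider "w \<notin> orbit ?\<rho> x" | "w \<in> orbit ?\<rho> x" by blast
  then have "num_cycles (?\<rho> \<circ> ?\<tau>) D + 2 * num_components a b D
    \<le> num_cycles ?\<rho> D + 2 * num_components a (b \<circ> ?\<tau>) D + 1"
  proof cases
    case 1
    have "num_cycles (?\<rho> \<circ> ?\<tau>) D + 1 = num_cycles ?\<rho> D"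
      using num_cycles_comp_transpose_merge[OF \<rho> fin assms(4,5) 1] .
    moreover have "num_components a b D \<le> num_components a (b \<circ> ?\<tau>) D + 1"
      unfolding num_components_def edges
      using card_rtrancl_classes_le_insert_sym_pair[OF sym_perm_pair_edges fin assms(4,5)] .
    ultimately show ?thesis by linarith
  next
    case 2
    have "num_cycles (?\<rho> \<circ> ?\<tau>) D \<le> num_cycles (?\<rho> \<circ> ?\<tau> \<circ> ?\<tau>) D + 1"
      using permutes_compose[OF permutes_swap_id[OF assms(4,5)] \<rho>] fin assms(4,5)
      by (rule num_cycles_le_comp_transpose)
    moreover have "?\<rho> \<circ> ?\<tau> \<circ> ?\<tau> = ?\<rho>" by (simp add: comp_assoc)
    moreover have "(x, w) \<in> ?E\<^sup>*"
      using 2 orbit_comp_subset_rtrancl[of a D b x] permutes_image[OF a] permutes_image[OF b] assms(4)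
      by auto
    then have "num_components a (b \<circ> ?\<tau>) D = num_components a b D"
      unfolding num_components_def edges rtrancl_insert_sym_pair_eq[OF sym_perm_pair_edges \<open>(x, w) \<in> ?E\<^sup>*\<close>] by simp
    ultimately show ?thesis by simp
  qed
  ultimately show ?thesis using IH b_merge by simp
qed

text \<open>The genus of the hypermap \<open>(a, b)\<close> is nonnegative.\<close>

theorem num_cycles_sum_le:
  assumes "finite D" "a permutes D" "b permutes D"
  shows "num_cycles a D + num_cycles b D + num_cycles (a \<circ> b) D \<le> card D + 2 * num_components a b D"
  using assms(3)
proof (induction "card {z \<in> D. b z \<noteq> z}" arbitrary: b rule: less_induct)
  case less
  show ?case
  proof (cases "\<exists>x\<in>D. b x \<noteq> x")
    case False
    then have "b = id" using permutes_not_in[OF less.prems] by (auto simp: fun_eq_iff)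
    then show ?thesis using num_components_id[OF assms(2,1)] by (simp add: num_cycles_id)
  next
    case True
    then obtain x where x: "x \<in> D" "b x \<noteq> x" by blast
    define w where "w = inv b x"
    have bw: "b w = x" using permutes_inverses(1)[OF less.prems] by (simp add: w_def)
    have w: "w \<in> D" using permutes_in_image[OF permutes_inv[OF less.prems]] x by (simp add: w_def)
    define b' where "b' = b \<circ> transpose x w"
    have b': "b' permutes D" using less.prems x w unfolding b'_def by (intro permutes_compose permutes_swap_id)
    have "b' x = x" by (simp add: b'_def bw)
    have "x \<noteq> w" using x bw by auto
    have b_eq: "b = b' \<circ> transpose x w" by (simp add: b'_def comp_assoc)
    have "{z \<in> D. b' z \<noteq> z} \<subset> {z \<in> D. b z \<noteq> z}"
      using x bw \<open>b' x = x\<close> by (auto simp: b'_def transpose_def)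
    then have "card {z \<in> D. b' z \<noteq> z} < card {z \<in> D. b z \<noteq> z}"
      using assms(1) by (intro psubset_card_mono) auto
    then have "num_cycles a D + num_cycles b' D + num_cycles (a \<circ> b') D \<le> card D + 2 * num_components a b' D"
      using less.hyps b' by blast
    then show ?thesis
      unfolding b_eq by (rule num_cycles_sum_le_comp_transpose[OF assms(1,2) b' x(1) w \<open>x \<noteq> w\<close> \<open>b' x = x\<close>])
  qed
qed

locale connected_plane_graph =
  fixes G :: "('v, 'd) pmap"
  assumes plane: "plane_map G" and connected: "connected_map G"
begin

lemma dart_props:
  assumes "d \<in> darts G"
  shows "tl_of G d \<in> verts G" "hd_of G d \<in> verts G" "rv G d \<in> darts G" "rv G (rv G d) = d"
    "rv G d \<noteq> d" "tl_of G (rv G d) = hd_of G d" "hd_of G (rv G d) = tl_of G d"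
  using plane assms unfolding plane_map_def by metis+

lemma finite_verts: "finite (verts G)" and finite_darts: "finite (darts G)"
  using plane unfolding plane_map_def by auto

lemma euler: "2 * int (card (verts G)) - int (card (darts G)) + 2 * int (card (faces G)) = 4"
  using plane unfolding plane_map_def by auto

lemma outer_in_faces: "outer G \<in> faces G"
  using plane unfolding plane_map_def by auto

lemma rot_orbit: "d \<in> darts G \<Longrightarrow> {(rot G ^^ n) d | n. True} = {d' \<in> darts G. tl_of G d' = tl_of G d}"
  using plane unfolding plane_map_def by auto

lemma rot_props:
  assumes "d \<in> darts G" shows "rot G d \<in> darts G" "tl_of G (rot G d) = tl_of G d"
  using rot_orbit[OF assms] by (force dest: arg_cong[where f = "(\<in>) (rot G d)"] intro: exI[of _ 1])+

lemma walk_verts: "is_walk G u ds x \<Longrightarrow> u \<in> verts G \<and> x \<in> verts G"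
  by (induction ds arbitrary: u) (auto dest: dart_props)

lemma walk_darts: "is_walk G u ds x \<Longrightarrow> set ds \<subseteq> darts G"
  by (induction ds arbitrary: u) auto

lemma walk_append_iff: "is_walk G u (xs @ ys) x \<longleftrightarrow> (\<exists>y. is_walk G u xs y \<and> is_walk G y ys x)"
  by (induction xs arbitrary: u) (auto dest: walk_verts)

lemma walk_end_unique: "is_walk G u ds x \<Longrightarrow> is_walk G u ds y \<Longrightarrow> x = y"
  by (induction ds arbitrary: u) auto

lemma walk_rev: "is_walk G u ds x \<Longrightarrow> is_walk G x (rev (map (rv G) ds)) u"
  by (induction ds arbitrary: u) (auto simp: walk_append_iff dart_props dest: walk_verts)

lemma exists_dart_at: "v \<in> verts G \<Longrightarrow> \<exists>d\<in>darts G. tl_of G d = v"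
proof -
  assume v: "v \<in> verts G"
  obtain d0 where d0: "d0 \<in> darts G" using outer_in_faces unfolding faces_def by blast
  obtain ds where "is_walk G v ds (tl_of G d0)"
    using connected v dart_props(1)[OF d0] unfolding connected_map_def by blast
  then show ?thesis using d0 by (cases ds) auto
qed

definition rot_perm :: "'d \<Rightarrow> 'd" where
  "rot_perm = perm_restrict (rot G) (darts G)"

text \<open>The face permutation of the map in which every edge outside \<open>T\<close> is cut into two pendant
  half-edges; \<open>cut_face_perm (darts G)\<close> is the face permutation of \<open>G\<close> itself.\<close>

definition cut_face_perm :: "'d set \<Rightarrow> 'd \<Rightarrow> 'd" where
  "cut_face_perm T = rot_perm \<circ> perm_restrict (rv G) T"

lemma rot_perm_permutes: "rot_perm permutes darts G"
proof (rule bij_imp_permutes)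
  have "bij_betw (rot G) (darts G) (darts G)" using plane unfolding plane_map_def by blast
  then show "bij_betw rot_perm (darts G) (darts G)"
    by (rule bij_betw_cong[THEN iffD1, rotated]) (simp add: rot_perm_def perm_restrict_simps)
qed (simp add: rot_perm_def perm_restrict_simps)

lemma rv_perm_permutes:
  assumes "T \<subseteq> darts G" "\<And>d. d \<in> T \<Longrightarrow> rv G d \<in> T"
  shows "perm_restrict (rv G) T permutes darts G"
proof (rule bij_imp_permutes)
  show "bij_betw (perm_restrict (rv G) T) (darts G) (darts G)"
    using assms by (intro bij_betwI[where g = "perm_restrict (rv G) T"])
      (auto simp: perm_restrict_def dart_props)
qed (use assms in \<open>auto simp: perm_restrict_def\<close>)

lemma cut_face_perm_permutes:
  "T \<subseteq> darts G \<Longrightarrow> (\<And>d. d \<in> T \<Longrightarrow> rv G d \<in> T) \<Longrightarrow> cut_face_perm T permutes darts G"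
  unfolding cut_face_perm_def by (intro permutes_compose rot_perm_permutes rv_perm_permutes)

lemma cut_face_perm_apply:
  "T \<subseteq> darts G \<Longrightarrow> d \<in> darts G \<Longrightarrow> cut_face_perm T d = (if d \<in> T then face_perm G d else rot G d)"
  by (auto simp: cut_face_perm_def rot_perm_def perm_restrict_def face_perm_def dart_props)

abbreviation \<phi> :: "'d \<Rightarrow> 'd" where
  "\<phi> \<equiv> cut_face_perm (darts G)"

lemma \<phi>_permutes: "\<phi> permutes darts G"
  by (rule cut_face_perm_permutes) (auto simp: dart_props)

lemma permutation_\<phi>: "permutation \<phi>"
  using \<phi>_permutes finite_darts by (rule permutes_imp_permutation[rotated])

lemma \<phi>_apply: "d \<in> darts G \<Longrightarrow> \<phi> d = face_perm G d"
  by (simp add: cut_face_perm_apply)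

lemma tl_\<phi>: "d \<in> darts G \<Longrightarrow> tl_of G (\<phi> d) = hd_of G d"
  by (simp add: \<phi>_apply face_perm_def rot_props dart_props)

lemma face_of_eq_orbit:
  assumes "d \<in> darts G" shows "face_of G d = orbit \<phi> d"
proof -
  have "(\<phi> ^^ n) d = (face_perm G ^^ n) d \<and> (\<phi> ^^ n) d \<in> darts G" for n
  proof (induction n)
    case (Suc n)
    define y where "y = (\<phi> ^^ n) d"
    have y: "y \<in> darts G" "(face_perm G ^^ n) d = y" using Suc.IH y_def by auto
    have "\<phi> y \<in> darts G" using permutes_in_image[OF \<phi>_permutes] y(1) by simp
    then show ?case using \<phi>_apply[OF y(1)] y y_def by simp
  qed (simp add: assms)
  then show ?thesis by (simp add: face_of_def orbit_altdef_permutation[OF permutation_\<phi>])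
qed

lemma faces_eq_orbits: "faces G = orbit \<phi> ` darts G"
  unfolding faces_def using face_of_eq_orbit by auto

lemma face_subset_darts: "f \<in> faces G \<Longrightarrow> f \<subseteq> darts G"
  unfolding faces_eq_orbits using permutes_orbit_subset[OF \<phi>_permutes] by blast

lemma finite_faces: "finite (faces G)"
  using finite_darts by (simp add: faces_def)

lemma finite_face: "f \<in> faces G \<Longrightarrow> finite f"
  using finite_darts face_subset_darts finite_subset by blast

lemma face_eq_orbit_of_mem:
  assumes "f \<in> faces G" "d \<in> f" shows "f = orbit \<phi> d"
proof -
  obtain e where e: "f = orbit \<phi> e" using assms(1) unfolding faces_eq_orbits by blast
  then have "d \<in> orbit \<phi> e" using assms(2) by simp
  then show ?thesis using e orbit_eq_if_in_orbit[OF permutation_\<phi>] by presburger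
qed

lemma \<phi>_in_face: "f \<in> faces G \<Longrightarrow> d \<in> f \<Longrightarrow> \<phi> d \<in> f"
  using face_eq_orbit_of_mem orbit.base by metis

lemma faces_disjoint: "f \<in> faces G \<Longrightarrow> g \<in> faces G \<Longrightarrow> f \<noteq> g \<Longrightarrow> f \<inter> g = {}"
  using face_eq_orbit_of_mem by blast

lemma orbit_rot_perm:
  assumes "d \<in> darts G" shows "orbit rot_perm d = {d' \<in> darts G. tl_of G d' = tl_of G d}"
proof -
  have "(rot_perm ^^ n) d = (rot G ^^ n) d \<and> (rot_perm ^^ n) d \<in> darts G" for n
    using assms by (induction n) (auto simp: rot_perm_def perm_restrict_simps rot_props)
  moreover have "permutation rot_perm"
    using rot_perm_permutes finite_darts permutes_imp_permutation by blast
  ultimately show ?thesis using rot_orbit[OF assms] by (simp add: orbit_altdef_permutation)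
qed

lemma card_verts_le_num_cycles_rot_perm: "card (verts G) \<le> num_cycles rot_perm (darts G)"
proof -
  have "verts G \<subseteq> tl_of G ` darts G" using exists_dart_at by blast
  then have "card (verts G) \<le> card (tl_of G ` darts G)" using finite_darts by (intro card_mono) auto
  also have "\<dots> \<le> num_cycles rot_perm (darts G)"
    unfolding num_cycles_def
  proof (rule card_image_le_card_image[OF finite_darts])
    fix d e assume de: "d \<in> darts G" "e \<in> darts G" "orbit rot_perm d = orbit rot_perm e"
    have "d \<in> orbit rot_perm d" using orbit_rot_perm[OF de(1)] de(1) by simp
    then show "tl_of G d = tl_of G e" using de(3) orbit_rot_perm[OF de(2)] by simp
  qed
  finally show ?thesis .
qed

end

locale vertex_labelling = connected_plane_graph G for G :: "('v, 'd) pmap" +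
  fixes lab :: "'v \<Rightarrow> 'l"
  assumes label_class_connected: "\<And>u x. u \<in> verts G \<Longrightarrow> x \<in> verts G \<Longrightarrow> lab u = lab x \<Longrightarrow>
      \<exists>ds. is_walk G u ds x \<and> (\<forall>d\<in>set ds. lab (tl_of G d) = lab (hd_of G d))"
    and two_labels: "2 \<le> card (lab ` verts G)"
begin

definition crossing :: "'d \<Rightarrow> bool" where
  "crossing d \<longleftrightarrow> lab (tl_of G d) \<noteq> lab (hd_of G d)"

definition num_crossings :: "'d set \<Rightarrow> nat" where
  "num_crossings f = card {d \<in> f. crossing d}"

lemma crossing_rv: "d \<in> darts G \<Longrightarrow> crossing (rv G d) \<longleftrightarrow> crossing d"
  by (auto simp: crossing_def dart_props)

abbreviation uncut :: "'d set" where
  "uncut \<equiv> {d \<in> darts G. \<not> crossing d}"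

abbreviation \<beta> :: "'d \<Rightarrow> 'd" where
  "\<beta> \<equiv> perm_restrict (rv G) uncut"

abbreviation \<psi> :: "'d \<Rightarrow> 'd" where
  "\<psi> \<equiv> cut_face_perm uncut"

lemma \<beta>_permutes: "\<beta> permutes darts G"
  by (rule rv_perm_permutes) (auto simp: dart_props crossing_rv)

lemma \<psi>_permutes: "\<psi> permutes darts G"
  by (rule cut_face_perm_permutes) (auto simp: dart_props crossing_rv)

lemma permutation_\<psi>: "permutation \<psi>"
  using \<psi>_permutes finite_darts by (rule permutes_imp_permutation[rotated])

lemma \<psi>_eq_rot_perm_comp_\<beta>: "\<psi> = rot_perm \<circ> \<beta>"
  by (simp add: cut_face_perm_def)

lemma lab_tl_\<psi>: "d \<in> darts G \<Longrightarrow> lab (tl_of G (\<psi> d)) = lab (tl_of G d)"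
  by (auto simp: cut_face_perm_apply face_perm_def rot_props dart_props crossing_def)

lemma lab_tl_orbit_\<psi>:
  assumes "d \<in> darts G" "e \<in> orbit \<psi> d" shows "lab (tl_of G e) = lab (tl_of G d)"
  using assms(2)
proof (induction rule: orbit.induct)
  case (step e)
  then have "e \<in> darts G" using permutes_orbit_subset[OF \<psi>_permutes assms(1)] by blast
  then show ?case using lab_tl_\<psi> step.IH by simp
qed (use assms(1) lab_tl_\<psi> in simp)

lemma card_darts_add_card_crossings:
  "card (darts G) + card {d \<in> darts G. crossing d} = 2 * num_cycles \<beta> (darts G)"
proof -
  have "{d \<in> darts G. \<beta> d = d} = {d \<in> darts G. crossing d}"
    by (auto simp: perm_restrict_def dart_props)
  moreover have "\<beta> (\<beta> d) = d" if "d \<in> darts G" for d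
    using that by (auto simp: perm_restrict_def dart_props crossing_rv)
  ultimately show ?thesis
    using card_add_card_fixpoints_involution[OF \<beta>_permutes finite_darts] by simp
qed

abbreviation dart_graph :: "('d \<times> 'd) set" where
  "dart_graph \<equiv> perm_pair_edges rot_perm \<beta> (darts G)"

lemma same_tail_connected:
  assumes "d1 \<in> darts G" "d2 \<in> darts G" "tl_of G d1 = tl_of G d2"
  shows "(d1, d2) \<in> dart_graph\<^sup>*"
proof -
  have "d2 \<in> orbit rot_perm d1" using orbit_rot_perm[OF assms(1)] assms by simp
  moreover have "orbit rot_perm d1 \<subseteq> dart_graph\<^sup>* `` {d1}"
    by (rule orbit_subset_rtrancl_Image[OF _ assms(1)])
      (use permutes_image[OF rot_perm_permutes] in \<open>auto intro!: r_into_rtrancl perm_pair_edgesI(1)\<close>)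
  ultimately show ?thesis by blast
qed

lemma uncut_walk_connected:
  assumes "is_walk G u ds x" "\<forall>d\<in>set ds. \<not> crossing d"
    and "d1 \<in> darts G" "tl_of G d1 = u" "d2 \<in> darts G" "tl_of G d2 = x"
  shows "(d1, d2) \<in> dart_graph\<^sup>*"
  using assms
proof (induction ds arbitrary: u d1)
  case Nil then show ?case using same_tail_connected by simp
next
  case (Cons d ds)
  then have d: "d \<in> darts G" "tl_of G d = u" "\<not> crossing d" by auto
  have "(d1, d) \<in> dart_graph\<^sup>*" using same_tail_connected Cons.prems d by simp
  moreover have "(d, rv G d) \<in> dart_graph"
    using d unfolding perm_pair_edges_def by (force simp: perm_restrict_def)
  moreover have "(rv G d, d2) \<in> dart_graph\<^sup>*"
    using Cons.IH[of "hd_of G d" "rv G d"] Cons.prems d dart_props by auto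
  ultimately show ?case by (meson converse_rtrancl_into_rtrancl rtrancl_trans)
qed

lemma num_components_le_card_labels: "num_components rot_perm \<beta> (darts G) \<le> card (lab ` verts G)"
proof -
  have "dart_graph\<^sup>* `` {d1} = dart_graph\<^sup>* `` {d2}"
    if d12: "d1 \<in> darts G" "d2 \<in> darts G" "lab (tl_of G d1) = lab (tl_of G d2)" for d1 d2
  proof -
    obtain ds where ds: "is_walk G (tl_of G d1) ds (tl_of G d2)"
      "\<forall>d\<in>set ds. lab (tl_of G d) = lab (hd_of G d)"
      using label_class_connected[OF dart_props(1)[OF d12(1)] dart_props(1)[OF d12(2)] d12(3)] by blast
    then have "\<forall>d\<in>set ds. \<not> crossing d" by (simp add: crossing_def)
    then have "d2 \<in> dart_graph\<^sup>* `` {d1}"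
      using uncut_walk_connected[OF ds(1) _ d12(1) refl d12(2) refl] by blast
    then show ?thesis using rtrancl_Image_eq_if_mem[OF sym_perm_pair_edges] by metis
  qed
  then have "num_components rot_perm \<beta> (darts G) \<le> card ((\<lambda>d. lab (tl_of G d)) ` darts G)"
    unfolding num_components_def by (rule card_image_le_card_image[OF finite_darts])
  also have "\<dots> \<le> card (lab ` verts G)"
    using finite_verts dart_props(1) by (intro card_mono) auto
  finally show ?thesis .
qed

lemma crossing_on_walk:
  "is_walk G u ds x \<Longrightarrow> lab x \<noteq> lab u \<Longrightarrow> \<exists>d\<in>set ds. crossing d \<and> lab (tl_of G d) = lab u"
proof (induction ds arbitrary: u)
  case (Cons d ds)
  show ?case
  proof (cases "crossing d")
    case False
    then have "lab (hd_of G d) = lab u" using Cons.prems by (auto simp: crossing_def)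
    then show ?thesis using Cons.IH[of "hd_of G d"] Cons.prems by auto
  qed (use Cons.prems in auto)
qed simp

lemma exists_crossing_with_tail_label:
  assumes "u \<in> verts G" shows "\<exists>z\<in>darts G. crossing z \<and> lab (tl_of G z) = lab u"
proof -
  have "lab ` verts G \<noteq> {lab u}" using two_labels by auto
  then obtain x where x: "x \<in> verts G" "lab x \<noteq> lab u" using assms by blast
  then obtain ds where "is_walk G u ds x"
    using connected assms unfolding connected_map_def by blast
  then show ?thesis using crossing_on_walk[OF _ x(2)] walk_darts by blast
qed

lemma no_crossing_if_num_crossings_0:
  "f \<in> faces G \<Longrightarrow> num_crossings f = 0 \<Longrightarrow> d \<in> f \<Longrightarrow> \<not> crossing d"
  using finite_face by (auto simp: num_crossings_def)

lemma orbit_\<psi>_eq_uncrossed_face: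
  assumes "f \<in> faces G" "num_crossings f = 0" "d \<in> f"
  shows "orbit \<psi> d = f"
proof -
  have "f = orbit \<phi> d" using face_eq_orbit_of_mem assms(1,3) .
  moreover have "orbit \<psi> d = orbit \<phi> d"
  proof (rule orbit_cong)
    show "d \<in> orbit \<phi> d" using permutation_\<phi> by (rule permutation_self_in_orbit)
    fix e assume "e \<in> orbit \<phi> d"
    then have "e \<in> f" "e \<in> darts G" using calculation face_subset_darts[OF assms(1)] by auto
    then show "\<psi> e = \<phi> e"
      using no_crossing_if_num_crossings_0[OF assms(1,2)] by (simp add: cut_face_perm_apply)
  qed
  ultimately show ?thesis by simp
qed

lemma card_labels_le_num_crossed_cycles:
  "card (lab ` verts G) \<le> card (orbit \<psi> ` {z \<in> darts G. crossing z})"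
proof -
  let ?Z = "{z \<in> darts G. crossing z}"
  have "lab u \<in> (\<lambda>z. lab (tl_of G z)) ` ?Z" if "u \<in> verts G" for u
    using exists_crossing_with_tail_label[OF that] by force
  then have "card (lab ` verts G) \<le> card ((\<lambda>z. lab (tl_of G z)) ` ?Z)"
    using finite_darts by (intro card_mono) auto
  also have "\<dots> \<le> card (orbit \<psi> ` ?Z)"
  proof (rule card_image_le_card_image)
    fix z1 z2 assume z: "z1 \<in> ?Z" "z2 \<in> ?Z" "orbit \<psi> z1 = orbit \<psi> z2"
    have "z2 \<in> orbit \<psi> z1" using z(3) permutation_self_in_orbit[OF permutation_\<psi>, of z2] by simp
    then show "lab (tl_of G z1) = lab (tl_of G z2)" using lab_tl_orbit_\<psi> z(1) by force
  qed (use finite_darts in simp)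
  finally show ?thesis .
qed

lemma card_uncrossed_faces_add_card_labels_le:
  "card {f \<in> faces G. num_crossings f = 0} + card (lab ` verts G) \<le> num_cycles \<psi> (darts G)"
proof -
  let ?F0 = "{f \<in> faces G. num_crossings f = 0}" and ?X = "orbit \<psi> ` {z \<in> darts G. crossing z}"
  have "?F0 \<subseteq> orbit \<psi> ` darts G"
  proof
    fix f assume f: "f \<in> ?F0"
    then obtain d where "d \<in> darts G" "f = orbit \<phi> d" unfolding faces_eq_orbits by blast
    then have "d \<in> f" "d \<in> darts G" using permutation_self_in_orbit[OF permutation_\<phi>] by simp_all
    then show "f \<in> orbit \<psi> ` darts G"
      using orbit_\<psi>_eq_uncrossed_face[of f d] f by force
  qed
  moreover have "?X \<subseteq> orbit \<psi> ` darts G" by blast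
  ultimately have "card (?F0 \<union> ?X) \<le> num_cycles \<psi> (darts G)"
    unfolding num_cycles_def using finite_darts by (intro card_mono) auto
  moreover have "?F0 \<inter> ?X = {}"
    using permutation_self_in_orbit[OF permutation_\<psi>] no_crossing_if_num_crossings_0 by blast
  then have "card (?F0 \<union> ?X) = card ?F0 + card ?X"
    using finite_faces finite_darts by (intro card_Un_disjoint) auto
  ultimately show ?thesis using card_labels_le_num_crossed_cycles by simp
qed

lemma tail_labels_subset:
  assumes f: "f \<in> faces G" and d: "d \<in> f"
  shows "(\<lambda>e. lab (tl_of G e)) ` f \<subseteq> insert (lab (tl_of G d)) ((\<lambda>c. lab (hd_of G c)) ` {c \<in> f. crossing c})"
    (is "_ \<subseteq> ?L")
proof -
  have advance: "lab (tl_of G (\<phi> e)) \<in> ?L" if e: "e \<in> f" "lab (tl_of G e) \<in> ?L" for e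
  proof -
    have "tl_of G (\<phi> e) = hd_of G e" using tl_\<phi> e(1) face_subset_darts[OF f] by blast
    then show ?thesis using e by (cases "crossing e") (auto simp: crossing_def)
  qed
  have "lab (tl_of G e) \<in> ?L" if "e \<in> orbit \<phi> d" for e
    using that
  proof (induction rule: orbit.induct)
    case base then show ?case using advance[OF d] by simp
  next
    case (step e)
    have "e \<in> f" using step.hyps face_eq_orbit_of_mem[OF f d] by simp
    then show ?case using advance step.IH by blast
  qed
  then show ?thesis using face_eq_orbit_of_mem[OF f d] by blast
qed

lemma tail_labels_subset_crossing_heads:
  assumes "f \<in> faces G" "c \<in> f" "crossing c"
  shows "(\<lambda>e. lab (tl_of G e)) ` f \<subseteq> (\<lambda>c. lab (hd_of G c)) ` {c \<in> f. crossing c}"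
proof -
  have "\<phi> c \<in> f" using \<phi>_in_face[OF assms(1,2)] .
  moreover have "tl_of G (\<phi> c) = hd_of G c"
    using tl_\<phi>[OF subsetD[OF face_subset_darts[OF assms(1)] assms(2)]] .
  ultimately show ?thesis using tail_labels_subset[OF assms(1), of "\<phi> c"] assms(2,3) by auto
qed

lemma num_crossings_neq_1: "f \<in> faces G \<Longrightarrow> num_crossings f \<noteq> 1"
proof
  assume f: "f \<in> faces G" and one: "num_crossings f = 1"
  obtain c where c: "{d \<in> f. crossing d} = {c}"
    using one unfolding num_crossings_def by (rule card_1_singletonE)
  then have "c \<in> f" "crossing c" by auto
  then have "lab (tl_of G c) = lab (hd_of G c)"
    using tail_labels_subset_crossing_heads[OF f \<open>c \<in> f\<close> \<open>crossing c\<close>] c by auto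
  then show False using \<open>crossing c\<close> by (simp add: crossing_def)
qed

lemma card_tail_labels_le_num_crossings:
  assumes f: "f \<in> faces G" and two: "2 \<le> card ((\<lambda>e. lab (tl_of G e)) ` f)"
  shows "card ((\<lambda>e. lab (tl_of G e)) ` f) \<le> num_crossings f"
proof (cases "\<exists>c\<in>f. crossing c")
  case True
  then obtain c where "c \<in> f" "crossing c" by blast
  then have "card ((\<lambda>e. lab (tl_of G e)) ` f) \<le> card ((\<lambda>c. lab (hd_of G c)) ` {c \<in> f. crossing c})"
    using tail_labels_subset_crossing_heads[OF f] finite_face[OF f] by (intro card_mono) auto
  also have "\<dots> \<le> num_crossings f"
    unfolding num_crossings_def using finite_face[OF f] by (intro card_image_le) simp
  finally show ?thesis .
next
  case False
  obtain d where "d \<in> f" using two by (cases "f = {}") auto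
  then have "(\<lambda>e. lab (tl_of G e)) ` f \<subseteq> {lab (tl_of G d)}"
    using tail_labels_subset[OF f] False by auto
  then have "card ((\<lambda>e. lab (tl_of G e)) ` f) \<le> 1" using card_mono[of "{lab (tl_of G d)}"] by fastforce
  then show ?thesis using two by simp
qed

lemma sum_num_crossings: "(\<Sum>f\<in>faces G. num_crossings f) = card {d \<in> darts G. crossing d}"
proof -
  have "(\<Union>f\<in>faces G. {d \<in> f. crossing d}) = {d \<in> darts G. crossing d}"
  proof
    show "{d \<in> darts G. crossing d} \<subseteq> (\<Union>f\<in>faces G. {d \<in> f. crossing d})"
      using permutation_self_in_orbit[OF permutation_\<phi>] unfolding faces_eq_orbits by blast
  qed (use face_subset_darts in blast)
  moreover have "card (\<Union>f\<in>faces G. {d \<in> f. crossing d}) = (\<Sum>f\<in>faces G. card {d \<in> f. crossing d})"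
    using finite_faces finite_face faces_disjoint by (intro card_UN_disjoint) auto
  ultimately show ?thesis by (simp add: num_crossings_def)
qed

lemma crossed_faces_bound:
  "2 * card {f \<in> faces G. 1 \<le> num_crossings f} + card {f \<in> faces G. 3 \<le> num_crossings f}
    \<le> card {d \<in> darts G. crossing d}"
proof -
  have "(\<Sum>f\<in>faces G. (if 1 \<le> num_crossings f then 2 else 0) + (if 3 \<le> num_crossings f then 1 else 0))
    \<le> (\<Sum>f\<in>faces G. num_crossings f)"
    using num_crossings_neq_1 by (intro sum_mono) fastforce
  moreover have "(\<Sum>f\<in>faces G. (if 1 \<le> num_crossings f then 2 else 0) + (if 3 \<le> num_crossings f then 1 else 0))
    = 2 * card {f \<in> faces G. 1 \<le> num_crossings f} + card {f \<in> faces G. 3 \<le> num_crossings f}"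
    using finite_faces by (simp add: sum.distrib sum.If_cases Int_def)
  ultimately show ?thesis using sum_num_crossings by simp
qed

theorem card_branching_faces_le:
  "card {f \<in> faces G. 3 \<le> num_crossings f} + 4 \<le> 2 * card (lab ` verts G)"
proof -
  let ?F0 = "{f \<in> faces G. num_crossings f = 0}" and ?F1 = "{f \<in> faces G. 1 \<le> num_crossings f}"
  have "num_cycles rot_perm (darts G) + num_cycles \<beta> (darts G) + num_cycles \<psi> (darts G)
      \<le> card (darts G) + 2 * num_components rot_perm \<beta> (darts G)"
    using num_cycles_sum_le[OF finite_darts rot_perm_permutes \<beta>_permutes] by (simp add: \<psi>_eq_rot_perm_comp_\<beta>)
  moreover have "2 * card (verts G) + 2 * card (faces G) = card (darts G) + 4"
    using euler by linarith
  moreover have "card (faces G) = card ?F0 + card ?F1"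
    using finite_faces by (subst card_Un_disjoint[symmetric]) (auto intro: arg_cong[where f = card])
  ultimately show ?thesis
    using card_verts_le_num_cycles_rot_perm card_darts_add_card_crossings
      card_uncrossed_faces_add_card_labels_le num_components_le_card_labels crossed_faces_bound
    by linarith
qed

end

locale shortest_paths = connected_plane_graph G for G :: "('v, 'd) pmap" +
  assumes no_neg_cycles: "no_neg_cycles G"
    and unique_shortest_paths: "unique_shortest_paths G"
begin

lemma walk_len_append: "walk_len G (xs @ ys) = walk_len G xs + walk_len G ys"
  by (simp add: walk_len_def)

lemma dist_le_walk_len:
  assumes "is_walk G u ds x" shows "dist G u x \<le> walk_len G ds"
proof -
  obtain R where R: "is_walk G x R u"
    using connected walk_verts[OF assms] unfolding connected_map_def by blast
  have "bdd_below {walk_len G ds | ds. is_walk G u ds x}"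
  proof (rule bdd_belowI)
    fix l assume "l \<in> {walk_len G ds | ds. is_walk G u ds x}"
    then obtain ds where ds: "l = walk_len G ds" "is_walk G u ds x" by auto
    then have "is_walk G u (ds @ R) u" using R walk_append_iff by blast
    then have "walk_len G (ds @ R) \<ge> 0" using no_neg_cycles unfolding no_neg_cycles_def by blast
    then show "- walk_len G R \<le> l" using ds by (simp add: walk_len_append)
  qed
  then show ?thesis unfolding dist_def using assms by (auto intro: cInf_lower)
qed

lemma shortest_walk_exists:
  assumes "u \<in> verts G" "x \<in> verts G"
  obtains ds where "is_walk G u ds x" "walk_len G ds = dist G u x"
  using unique_shortest_paths assms unfolding unique_shortest_paths_def is_path_def by blast

end

locale voronoi = shortest_paths G for G :: "('v, 'd) pmap" +
  fixes S :: "'v site set"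
  assumes finite_sites: "finite S" and two_sites: "2 \<le> card S"
    and generic: "generic G S" and independent: "independent G S"
    and site_in_verts: "s \<in> S \<Longrightarrow> fst s \<in> verts G"
begin

abbreviation wdist :: "'v site \<Rightarrow> 'v \<Rightarrow> real" where
  "wdist s x \<equiv> snd s + dist G (fst s) x"

lemma cell_iff: "x \<in> cell G s S \<longleftrightarrow> x \<in> verts G \<and> (\<forall>t\<in>S - {s}. wdist s x \<le> wdist t x)"
  by (simp add: cell_def)

lemma exists_cell:
  assumes "x \<in> verts G" shows "\<exists>s\<in>S. x \<in> cell G s S"
proof -
  have "Min ((\<lambda>s. wdist s x) ` S) \<in> (\<lambda>s. wdist s x) ` S"
    using finite_sites two_sites by (intro Min_in) auto
  then obtain s where s: "s \<in> S" "wdist s x = Min ((\<lambda>s. wdist s x) ` S)" by auto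
  then have "\<forall>t\<in>S. wdist s x \<le> wdist t x" using finite_sites by simp
  then show ?thesis using s(1) assms by (auto simp: cell_iff)
qed

lemma wdist_less_if_cell:
  assumes "s \<in> S" "t \<in> S" "t \<noteq> s" "x \<in> cell G s S" shows "wdist s x < wdist t x"
proof -
  have "wdist s x \<le> wdist t x" "x \<in> verts G" using assms by (auto simp: cell_iff)
  moreover have "wdist s x \<noteq> wdist t x"
    using generic assms \<open>x \<in> verts G\<close> unfolding generic_def by metis
  ultimately show ?thesis by simp
qed

lemma cell_unique:
  assumes "s \<in> S" "t \<in> S" "x \<in> cell G s S" "x \<in> cell G t S" shows "s = t"
  using wdist_less_if_cell[OF assms(1,2) _ assms(3)] wdist_less_if_cell[OF assms(2,1) _ assms(4)]
  by fastforce

definition site_of :: "'v \<Rightarrow> 'v site" where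
  "site_of x = (THE s. s \<in> S \<and> x \<in> cell G s S)"

lemma site_of_eq: "s \<in> S \<Longrightarrow> x \<in> cell G s S \<Longrightarrow> site_of x = s"
  unfolding site_of_def using cell_unique by blast

lemma site_of_in_sites: "x \<in> verts G \<Longrightarrow> site_of x \<in> S"
  and in_cell_site_of: "x \<in> verts G \<Longrightarrow> x \<in> cell G (site_of x) S"
  using exists_cell site_of_eq by metis+

text \<open>A site \<open>t\<close> beating \<open>s\<close> at \<open>y\<close> would also beat it at \<open>x\<close>, along the rest of the shortest walk.\<close>

lemma shortest_walk_prefix_in_cell:
  assumes s: "s \<in> S" and x: "x \<in> cell G s S"
    and P: "is_walk G (fst s) (P1 @ P2) x" "walk_len G (P1 @ P2) = dist G (fst s) x"
    and P1: "is_walk G (fst s) P1 y"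
  shows "y \<in> cell G s S"
proof -
  have P2: "is_walk G y P2 x" using P(1) P1 walk_append_iff walk_end_unique by metis
  have y: "y \<in> verts G" using walk_verts[OF P1] by simp
  have "wdist s y \<le> wdist t y" if t: "t \<in> S - {s}" for t
  proof -
    obtain Q where Q: "is_walk G (fst t) Q y" "walk_len G Q = dist G (fst t) y"
      using shortest_walk_exists[OF site_in_verts y] t by blast
    have "is_walk G (fst t) (Q @ P2) x" using Q(1) P2 walk_append_iff by blast
    then have "dist G (fst t) x \<le> dist G (fst t) y + walk_len G P2"
      using dist_le_walk_len Q(2) by (fastforce simp: walk_len_append)
    moreover have "dist G (fst s) y \<le> walk_len G P1" using dist_le_walk_len P1 by blast
    moreover have "wdist s x \<le> wdist t x" using x t by (auto simp: cell_iff)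
    ultimately show ?thesis using P(2) by (simp add: walk_len_append)
  qed
  then show ?thesis using y by (simp add: cell_iff)
qed

lemma shortest_walk_in_cell:
  assumes s: "s \<in> S" and x: "x \<in> cell G s S"
  obtains P where "is_walk G (fst s) P x" "\<forall>d\<in>set P. tl_of G d \<in> cell G s S \<and> hd_of G d \<in> cell G s S"
proof -
  obtain P where P: "is_walk G (fst s) P x" "walk_len G P = dist G (fst s) x"
    using shortest_walk_exists[OF site_in_verts[OF s]] x by (auto simp: cell_iff)
  have "tl_of G d \<in> cell G s S \<and> hd_of G d \<in> cell G s S" if "d \<in> set P" for d
  proof -
    obtain P1 P2 where P12: "P = P1 @ d # P2" using \<open>d \<in> set P\<close> by (meson split_list)
    then obtain y where y: "is_walk G (fst s) P1 y" "is_walk G y (d # P2) x"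
      using P(1) walk_append_iff by blast
    then have "is_walk G (fst s) (P1 @ [d]) (hd_of G d)"
      using walk_append_iff walk_verts by (auto dest: dart_props)
    then have "hd_of G d \<in> cell G s S"
      using shortest_walk_prefix_in_cell[OF s x, of "P1 @ [d]" P2] P P12 by simp
    moreover have "tl_of G d \<in> cell G s S"
      using shortest_walk_prefix_in_cell[OF s x, of P1 "d # P2" y] P P12 y by simp
    ultimately show ?thesis by simp
  qed
  then show ?thesis using that P(1) by blast
qed

lemma site_in_own_cell:
  assumes s: "s \<in> S" shows "fst s \<in> cell G s S"
proof -
  obtain x where x: "x \<in> cell G s S" using independent s unfolding independent_def by blast
  then obtain P where "is_walk G (fst s) P x" "walk_len G P = dist G (fst s) x"
    using shortest_walk_exists[OF site_in_verts[OF s]] by (auto simp: cell_iff)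
  then show ?thesis
    using shortest_walk_prefix_in_cell[OF s x, of "[]" P "fst s"] site_in_verts[OF s] by simp
qed

lemma site_of_site: "s \<in> S \<Longrightarrow> site_of (fst s) = s"
  using site_of_eq site_in_own_cell by blast

lemma card_site_labels: "card (site_of ` verts G) = card S"
proof -
  have "s \<in> site_of ` verts G" if "s \<in> S" for s
    using site_of_site[OF that] site_in_verts[OF that] by (metis image_eqI)
  then have "site_of ` verts G = S" using site_of_in_sites by blast
  then show ?thesis by simp
qed

lemma GD_iff: "s \<noteq> t \<Longrightarrow> x \<in> GD G s t \<longleftrightarrow> x \<in> verts G \<and> wdist s x \<le> wdist t x"
  by (auto simp: GD_def cell_def)

lemma GD_disjoint: "s \<in> S \<Longrightarrow> t \<in> S \<Longrightarrow> s \<noteq> t \<Longrightarrow> x \<in> GD G s t \<Longrightarrow> x \<notin> GD G t s"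
  using generic GD_iff[of s t x] GD_iff[of t s x] unfolding generic_def by force

lemma GD_cover: "s \<noteq> t \<Longrightarrow> x \<in> verts G \<Longrightarrow> x \<in> GD G s t \<or> x \<in> GD G t s"
  using GD_iff[of s t x] GD_iff[of t s x] by auto

lemma cell_iff_GD: "x \<in> cell G s S \<longleftrightarrow> x \<in> verts G \<and> (\<forall>t\<in>S - {s}. x \<in> GD G s t)"
proof -
  have "x \<in> GD G s t \<longleftrightarrow> x \<in> verts G \<and> wdist s x \<le> wdist t x" if "t \<in> S - {s}" for t
    using that GD_iff[of s t x] by auto
  then show ?thesis unfolding cell_iff by blast
qed

lemma hd_in_GD_if_not_bis_dart:
  assumes "s \<noteq> t" "d \<in> darts G" "\<not> bis_dart G s t d" "tl_of G d \<in> GD G s t"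
  shows "hd_of G d \<in> GD G s t"
  using assms GD_cover[OF assms(1) dart_props(2)[OF assms(2)]] unfolding bis_dart_def by blast

lemma not_bis_dart_if_GD:
  assumes "s \<in> S" "t \<in> S" "s \<noteq> t" "tl_of G d \<in> GD G s t" "hd_of G d \<in> GD G s t"
  shows "\<not> bis_dart G s t d"
  using assms GD_disjoint[OF assms(1-3)] GD_disjoint[OF assms(2,1)] unfolding bis_dart_def by blast

lemma side_subset_GD:
  assumes "s \<in> S" "t \<in> S" "s \<noteq> t" shows "side G s t \<subseteq> GD G s t"
proof
  fix x assume "x \<in> side G s t"
  then obtain ds where ds: "is_walk G (fst s) ds x" "\<forall>d\<in>set ds. \<not> bis_dart G s t d"
    unfolding side_def by blast
  have "x \<in> GD G s t" if "u \<in> GD G s t" "is_walk G u ds x" "\<forall>d\<in>set ds. \<not> bis_dart G s t d" for u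
    using that
  proof (induction ds arbitrary: u)
    case (Cons d ds)
    then show ?case using hd_in_GD_if_not_bis_dart[OF assms(3), of d] by auto
  qed simp
  moreover have "fst s \<in> GD G s t"
    using site_in_own_cell[OF assms(1)] cell_iff_GD assms by blast
  ultimately show "x \<in> GD G s t" using ds by blast
qed

lemma cell_subset_side:
  assumes "s \<in> S" "t \<in> S" "s \<noteq> t" "x \<in> cell G s S" shows "x \<in> side G s t"
proof -
  obtain P where P: "is_walk G (fst s) P x" "\<forall>d\<in>set P. tl_of G d \<in> cell G s S \<and> hd_of G d \<in> cell G s S"
    using shortest_walk_in_cell[OF assms(1,4)] .
  have "\<forall>d\<in>set P. \<not> bis_dart G s t d"
    using P(2) cell_iff_GD not_bis_dart_if_GD[OF assms(1-3)] assms(2,3) by blast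
  then show ?thesis using P(1) unfolding side_def by blast
qed

lemma dual_edge_in_AVR_iff:
  assumes "d \<in> darts G" "s \<in> S"
  shows "dual_edge_in_AVR G S s d \<longleftrightarrow> tl_of G d \<in> cell G s S \<and> hd_of G d \<in> cell G s S"
proof
  assume A: "dual_edge_in_AVR G S s d"
  have "tl_of G d \<in> GD G s t \<and> hd_of G d \<in> GD G s t" if t: "t \<in> S - {s}" for t
  proof -
    have nb: "\<not> bis_dart G s t d" "tl_of G d \<in> side G s t"
      using A t unfolding dual_edge_in_AVR_def dual_edge_in_D_def by auto
    then have "tl_of G d \<in> GD G s t" using side_subset_GD[OF assms(2)] t by blast
    then show ?thesis using hd_in_GD_if_not_bis_dart[OF _ assms(1) nb(1)] t by blast
  qed
  then show "tl_of G d \<in> cell G s S \<and> hd_of G d \<in> cell G s S"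
    using cell_iff_GD dart_props[OF assms(1)] by blast
next
  assume "tl_of G d \<in> cell G s S \<and> hd_of G d \<in> cell G s S"
  then show "dual_edge_in_AVR G S s d"
    unfolding dual_edge_in_AVR_def dual_edge_in_D_def
    using not_bis_dart_if_GD[OF assms(2)] cell_subset_side[OF assms(2)] cell_iff_GD
    by blast
qed

lemma AVD_edge_iff: "AVD_edge G S d \<longleftrightarrow> d \<in> darts G \<and> site_of (tl_of G d) \<noteq> site_of (hd_of G d)"
proof (cases "d \<in> darts G")
  case True
  have "(\<forall>s\<in>S. \<not> dual_edge_in_AVR G S s d) \<longleftrightarrow> site_of (tl_of G d) \<noteq> site_of (hd_of G d)"
    using dual_edge_in_AVR_iff[OF True] site_of_eq site_of_in_sites in_cell_site_of dart_props[OF True]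
    by metis
  then show ?thesis using True by (simp add: AVD_edge_def)
qed (simp add: AVD_edge_def)


sublocale vertex_labelling G site_of
proof
  fix u x assume u: "u \<in> verts G" and x: "x \<in> verts G" and ux: "site_of u = site_of x"
  let ?s = "site_of u"
  have s: "?s \<in> S" using site_of_in_sites[OF u] .
  obtain P where P: "is_walk G (fst ?s) P u" "\<forall>d\<in>set P. tl_of G d \<in> cell G ?s S \<and> hd_of G d \<in> cell G ?s S"
    using shortest_walk_in_cell[OF s in_cell_site_of[OF u]] by blast
  have "x \<in> cell G ?s S" using in_cell_site_of[OF x] ux by simp
  then obtain Q where Q: "is_walk G (fst ?s) Q x" "\<forall>d\<in>set Q. tl_of G d \<in> cell G ?s S \<and> hd_of G d \<in> cell G ?s S"
    using shortest_walk_in_cell[OF s] by blast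
  have "is_walk G u (rev (map (rv G) P) @ Q) x"
    using walk_rev[OF P(1)] Q(1) walk_append_iff by blast
  moreover have "\<forall>d\<in>set (rev (map (rv G) P) @ Q). site_of (tl_of G d) = site_of (hd_of G d)"
    using P(2) Q(2) walk_darts[OF P(1)] site_of_eq[OF s] by (auto simp: dart_props)
  ultimately show "\<exists>ds. is_walk G u ds x \<and> (\<forall>d\<in>set ds. site_of (tl_of G d) = site_of (hd_of G d))"
    by blast
qed (use two_sites card_site_labels in simp)

lemma AVD_vertices_eq: "AVD_vertices G S = {f \<in> faces G. 3 \<le> num_crossings f}"
proof -
  have "AVD_deg G S f = num_crossings f" if "f \<in> faces G" for f
  proof -
    have "{d \<in> f. AVD_edge G S d} = {d \<in> f. crossing d}"
      using AVD_edge_iff face_subset_darts[OF that] by (auto simp: crossing_def)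
    then show ?thesis unfolding AVD_deg_def num_crossings_def by simp
  qed
  then show ?thesis unfolding AVD_vertices_def by auto
qed

lemma card_AVD_vertices_le: "card (AVD_vertices G S) + 4 \<le> 2 * card S"
  using card_branching_faces_le card_site_labels AVD_vertices_eq by simp

lemma card_sites_le_num_crossings_outer:
  assumes "\<forall>s\<in>S. on_outer_face G (fst s)"
  shows "card S \<le> num_crossings (outer G)"
proof -
  have "s \<in> (\<lambda>e. site_of (tl_of G e)) ` outer G" if s: "s \<in> S" for s
  proof -
    obtain d where "d \<in> outer G" "tl_of G d = fst s"
      using assms s unfolding on_outer_face_def by blast
    then show ?thesis using site_of_site[OF s] by force
  qed
  then have labels: "card S \<le> card ((\<lambda>e. site_of (tl_of G e)) ` outer G)"
    using finite_face[OF outer_in_faces] by (intro card_mono) auto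
  then have "card ((\<lambda>e. site_of (tl_of G e)) ` outer G) \<le> num_crossings (outer G)"
    using two_sites by (intro card_tail_labels_le_num_crossings[OF outer_in_faces]) simp
  then show ?thesis using labels by simp
qed

end

theorem mainTheorem10:
  fixes G :: "('v, 'd) pmap" and S :: "'v site set"
  assumes "plane_map G"
    and "connected_map G"
    and "no_neg_cycles G"
    and "unique_shortest_paths G"
    and "finite S" and "card S = 3"
    and "generic G S"
    and "independent G S"
    and "\<forall>s\<in>S. fst s \<in> verts G \<and> on_outer_face G (fst s)"
  shows "card (AVD_vertices G S - {outer G}) \<le> 1"
proof -
  interpret voronoi G S using assms by unfold_locales auto
  have "outer G \<in> AVD_vertices G S"
    using card_sites_le_num_crossings_outer assms(6,9) outer_in_faces AVD_vertices_eq by simp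
  moreover have "card (AVD_vertices G S) \<le> 2" using card_AVD_vertices_le assms(6) by simp
  ultimately show ?thesis by (simp add: card_Diff_singleton)
qed

end
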